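(* Let $n$ and $0<n_1<\cdots<n_d<n$ be integers with $m_1=n_1$, $m_k=n_k-n_{k-1}$ ($2\le k\le d$), $m_{d+1}=n-n_d$, and equip $\mathrm{Flag}(n_1,\dots,n_d;n)=\{(VJ_1V^{\mathsf T},\dots,VJ_{d+1}V^{\mathsf T}):V\in\mathrm{O}(n)\}\subseteq(\mathbb{R}^{n\times n})^{d+1}$ with the metric induced by the Frobenius inner product. Let $V_0\in\mathrm{O}(n)$ and $A,B\in\mathfrak{so}(n)$ with $A(k,k)=B(k,k)=0$ for $k=1,\dots,d+1$. Let $V(t)=V_0\exp(tA)$, so that $c(t)=V(t)(J_1,\dots,J_{d+1})V(t)^{\mathsf T}$ is the geodesic through $V_0(J_1,\dots,J_{d+1})V_0^{\mathsf T}$ with initial direction $V_0(AJ_1-J_1A,\dots,AJ_{d+1}-J_{d+1}A)V_0^{\mathsf T}$. Then the parallel transport along $c$ of $Y(0)=V_0(BJ_1-J_1B,\dots,BJ_{d+1}-J_{d+1}B)V_0^{\mathsf T}$ is \[ Y(t)=V(t)\big(X(t)J_1-J_1X(t),\dots,X(t)J_{d+1}-J_{d+1}X(t)\big)V(t)^{\mathsf T}, \] where $X(t)$ solves $\dot X(t)=\tfrac12\,\pi([X(t),A])$, $X(0)=B$.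
   Context: $J_k=\operatorname{diag}(-I_{m_1},\dots,-I_{m_{k-1}},I_{m_k},-I_{m_{k+1}},\dots,-I_{m_{d+1}})$ for $k=1,\dots,d+1$. $V(M_1,\dots,M_{d+1})V^{\mathsf T}$ denotes $(VM_1V^{\mathsf T},\dots,VM_{d+1}V^{\mathsf T})$. For an $n\times n$ matrix $M$, $M(p,q)$ denotes its $(p,q)$ block in the partition $n=m_1+\cdots+m_{d+1}$; for $M\in\mathfrak{so}(n)$, $\pi(M)$ is obtained by setting all diagonal blocks to zero; $[X,A]=XA-AX$. Parallel transport is with respect to the Levi-Civita connection of the induced metric, i.e. $Y$ is parallel iff the orthogonal projection of $\dot Y(t)$ onto $\mathbb{T}_{c(t)}\mathrm{Flag}$ vanishes. *)

theory Defs
  imports "HOL-Analysis.Analysis"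
begin

(* Matrices are real^'n^'n, the index type 'n is finite and linearly ordered;
   the position of index i (0-based) is the number of indices below it. *)
definition pos :: "'n::{finite,linorder} \<Rightarrow> nat" where
  "pos i = card {j. j < i}"

(* ns 0 = 0, ns 1 = n_1, ..., ns d = n_d, ns (d+1) = n.
   blk ns i = k  iff  ns (k-1) \<le> pos i < ns k, i.e. i lies in the k-th block. *)
definition blk :: "(nat \<Rightarrow> nat) \<Rightarrow> 'n::{finite,linorder} \<Rightarrow> nat" where
  "blk ns i = (LEAST k. pos i < ns k)"

definition Jmat :: "(nat \<Rightarrow> nat) \<Rightarrow> nat \<Rightarrow> real^('n::{finite,linorder})^('n::{finite,linorder})" where
  "Jmat ns k = (\<chi> i j. if i = j then (if blk ns i = k then 1 else -1) else 0)"

primrec matpow :: "real^'n^'n \<Rightarrow> nat \<Rightarrow> real^'n^'n" where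
  "matpow A 0 = mat 1"
| "matpow A (Suc m) = matpow A m ** A"

definition mexp :: "real^'n^'n \<Rightarrow> real^'n^'n" where
  "mexp A = (\<Sum>m. (1 / fact m) *\<^sub>R matpow A m)"

definition skew :: "real^'n^'n \<Rightarrow> bool" where
  "skew A \<longleftrightarrow> transpose A = - A"

definition commutator :: "real^'n^'n \<Rightarrow> real^'n^'n \<Rightarrow> real^'n^'n" where
  "commutator X A = X ** A - A ** X"

definition diag_blocks_zero :: "(nat \<Rightarrow> nat) \<Rightarrow> real^('n::{finite,linorder})^('n::{finite,linorder}) \<Rightarrow> bool" where
  "diag_blocks_zero ns M \<longleftrightarrow> (\<forall>i j. blk ns i = blk ns j \<longrightarrow> M $ i $ j = 0)"

definition piblk :: "(nat \<Rightarrow> nat) \<Rightarrow> real^('n::{finite,linorder})^('n::{finite,linorder}) \<Rightarrow> real^('n::{finite,linorder})^('n::{finite,linorder})" where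
  "piblk ns M = (\<chi> i j. if blk ns i = blk ns j then 0 else M $ i $ j)"

(* (d+1)-tuples of matrices are functions on {1..d+1}, zero elsewhere *)
definition tconj :: "nat \<Rightarrow> real^'n^'n \<Rightarrow> (nat \<Rightarrow> real^'n^'n) \<Rightarrow> (nat \<Rightarrow> real^'n^'n)" where
  "tconj d V M = (\<lambda>k. if k \<in> {1..d+1} then V ** M k ** transpose V else 0)"

definition Flag :: "(nat \<Rightarrow> nat) \<Rightarrow> nat \<Rightarrow> (nat \<Rightarrow> real^('n::{finite,linorder})^('n::{finite,linorder})) set" where
  "Flag ns d = {tconj d V (Jmat ns) | V. orthogonal_matrix V}"

(* Frobenius inner product on (R^{n x n})^{d+1}; on real^'n^'n, \<bullet> is the Frobenius product *)
definition tinner :: "nat \<Rightarrow> (nat \<Rightarrow> real^'n^'n) \<Rightarrow> (nat \<Rightarrow> real^'n^'n) \<Rightarrow> real" where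
  "tinner d M N = (\<Sum>k = 1..d+1. M k \<bullet> N k)"

definition thas_deriv :: "nat \<Rightarrow> (real \<Rightarrow> nat \<Rightarrow> real^'n^'n) \<Rightarrow> (nat \<Rightarrow> real^'n^'n) \<Rightarrow> real \<Rightarrow> bool" where
  "thas_deriv d Y Y' t \<longleftrightarrow>
     (\<forall>k \<in> {1..d+1}. ((\<lambda>s. Y s k) has_vector_derivative Y' k) (at t)) \<and>
     (\<forall>k. k \<notin> {1..d+1} \<longrightarrow> Y' k = 0)"

(* tangent space of Flag at p (as embedded submanifold): velocities of curves in Flag through p *)
definition TFlag :: "(nat \<Rightarrow> nat) \<Rightarrow> nat \<Rightarrow> (nat \<Rightarrow> real^('n::{finite,linorder})^('n::{finite,linorder})) \<Rightarrow> (nat \<Rightarrow> real^('n::{finite,linorder})^('n::{finite,linorder})) set" where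
  "TFlag ns d p = {v. \<exists>\<gamma>. (\<forall>t. \<gamma> t \<in> Flag ns d) \<and> \<gamma> 0 = p \<and> thas_deriv d \<gamma> v 0}"

(* Y is a parallel vector field along c (Levi-Civita connection of the induced metric):
   Y(t) is tangent at c(t), Y is differentiable, and the orthogonal projection of
   dY/dt onto the tangent space at c(t) vanishes (i.e. dY/dt is orthogonal to it). *)
definition parallel_along :: "(nat \<Rightarrow> nat) \<Rightarrow> nat \<Rightarrow> (real \<Rightarrow> nat \<Rightarrow> real^('n::{finite,linorder})^('n::{finite,linorder}))
     \<Rightarrow> (real \<Rightarrow> nat \<Rightarrow> real^('n::{finite,linorder})^('n::{finite,linorder})) \<Rightarrow> bool" where
  "parallel_along ns d c Y \<longleftrightarrow>
     (\<forall>t. Y t \<in> TFlag ns d (c t) \<and>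
          (\<exists>Y'. thas_deriv d Y Y' t \<and> (\<forall>w \<in> TFlag ns d (c t). tinner d Y' w = 0)))"

end

theory Submission
  imports Defs
begin

text \<open>
  In the moving frame \<open>V(t)\<close> the field is \<open>Y(t) = V [X, J\<^sub>k] V\<^sup>T\<close>, which is tangent to the flag
  manifold as soon as \<open>X(t)\<close> is skew (take the curve \<open>V exp(sX) J exp(-sX) V\<^sup>T\<close>); skewness and
  the vanishing of the diagonal blocks are preserved by the equation for \<open>X\<close>, by uniqueness for
  linear differential equations. In the frame, \<open>Y'\<close> becomes \<open>[A, [X, J\<^sub>k]] + [X', J\<^sub>k]\<close>.
  Differentiating the flag equations \<open>P\<^sub>k\<^sup>2 = I\<close> and \<open>(I + P\<^sub>k)(I + P\<^sub>l) = 0\<close> shows that a tangent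
  vector \<open>W\<close> (in the frame) has \<open>W\<^sub>k(i,j) = 0\<close> unless exactly one of \<open>i, j\<close> lies in block \<open>k\<close>,
  and \<open>W\<^bsub>b(i)\<^esub>(i,j) = - W\<^bsub>b(j)\<^esub>(i,j)\<close>. Hence the pairing of \<open>Y'\<close> with \<open>W\<close> is a sum of
  differences of entries of the frame derivative in two blocks, and each such difference is
  \<open>2([A, X] + 2X')(i,j) = 0\<close>, because \<open>A\<close> and \<open>X\<close> have vanishing diagonal blocks and
  \<open>X' = \<pi>([X, A])/2\<close>.
\<close>

section \<open>The matrix exponential\<close>

text \<open>Square matrices are not a type class instance of \<^class>\<open>real_normed_algebra_1\<close>, so the
  exponential is taken in the isomorphic algebra of operators \<open>\<real>\<^sup>n \<rightarrow> \<real>\<^sup>n\<close>.\<close>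

typedef (overloaded) ('n::finite) endo = "UNIV :: ((real^'n) \<Rightarrow>\<^sub>L (real^'n)) set"
  morphisms blinfun_of_endo endo_of_blinfun by auto

setup_lifting type_definition_endo

instantiation endo :: (finite) real_normed_algebra_1
begin
lift_definition zero_endo :: "'a endo" is 0 .
lift_definition one_endo :: "'a endo" is id_blinfun .
lift_definition plus_endo :: "'a endo \<Rightarrow> 'a endo \<Rightarrow> 'a endo" is "(+)" .
lift_definition minus_endo :: "'a endo \<Rightarrow> 'a endo \<Rightarrow> 'a endo" is "(-)" .
lift_definition uminus_endo :: "'a endo \<Rightarrow> 'a endo" is "uminus" .
lift_definition times_endo :: "'a endo \<Rightarrow> 'a endo \<Rightarrow> 'a endo" is "(o\<^sub>L)" .
lift_definition scaleR_endo :: "real \<Rightarrow> 'a endo \<Rightarrow> 'a endo" is "scaleR" .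
lift_definition norm_endo :: "'a endo \<Rightarrow> real" is norm .
definition dist_endo :: "'a endo \<Rightarrow> 'a endo \<Rightarrow> real" where "dist_endo a b = norm (a - b)"
definition sgn_endo :: "'a endo \<Rightarrow> 'a endo" where "sgn_endo x = scaleR (inverse (norm x)) x"
definition uniformity_endo :: "('a endo \<times> 'a endo) filter" where
  "uniformity_endo = (INF e\<in>{0 <..}. principal {(x, y). dist x y < e})"
definition open_endo :: "'a endo set \<Rightarrow> bool"
  where "open_endo S = (\<forall>x\<in>S. \<forall>\<^sub>F (x', y) in uniformity. x' = x \<longrightarrow> y \<in> S)"
instance
proof
  show "norm (1::'a endo) = 1" by transfer simp
next
  fix a b c :: "'a endo" and r :: real
  show "a * b * c = a * (b * c)" by transfer (auto intro!: blinfun_eqI)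
  show "(a + b) * c = a * c + b * c" by transfer (auto intro!: blinfun_eqI simp: blinfun.bilinear_simps)
  show "a * (b + c) = a * b + a * c" by transfer (auto intro!: blinfun_eqI simp: blinfun.bilinear_simps)
  show "r *\<^sub>R a * b = r *\<^sub>R (a * b)" by transfer (auto intro!: blinfun_eqI simp: blinfun.bilinear_simps)
  show "a * r *\<^sub>R b = r *\<^sub>R (a * b)" by transfer (auto intro!: blinfun_eqI simp: blinfun.bilinear_simps)
  show "norm (a * b) \<le> norm a * norm b" by transfer (rule norm_blinfun_compose)
  show "1 * a = a" by transfer (auto intro!: blinfun_eqI)
  show "a * 1 = a" by transfer (auto intro!: blinfun_eqI)
  show "(0::'a endo) \<noteq> 1" by transfer (metis norm_blinfun_id norm_zero zero_neq_one)
qed (unfold dist_endo_def open_endo_def sgn_endo_def uniformity_endo_def,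
     (rule refl | (transfer, force simp: algebra_simps norm_triangle_ineq))+)
end

lemma dist_endo_blinfun: "dist x y = dist (blinfun_of_endo x) (blinfun_of_endo y)"
  unfolding dist_endo_def dist_norm by transfer simp

instance endo :: (finite) banach
proof
  fix X :: "nat \<Rightarrow> 'a endo"
  assume "Cauchy X"
  then have "Cauchy (\<lambda>n. blinfun_of_endo (X n))"
    unfolding Cauchy_def dist_endo_blinfun by simp
  then obtain L where "(\<lambda>n. blinfun_of_endo (X n)) \<longlonglongrightarrow> L"
    using convergent_def Cauchy_convergent_iff by blast
  then have "X \<longlonglongrightarrow> endo_of_blinfun L"
    unfolding tendsto_iff dist_endo_blinfun by (simp add: endo_of_blinfun_inverse)
  then show "convergent X" by (auto simp: convergent_def)
qed

definition endo_of_matrix :: "real^'n^'n \<Rightarrow> ('n::finite) endo" where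
  "endo_of_matrix M = endo_of_blinfun (Blinfun (\<lambda>x. M *v x))"

definition matrix_of_endo :: "('n::finite) endo \<Rightarrow> real^'n^'n" where
  "matrix_of_endo x = matrix (blinfun_apply (blinfun_of_endo x))"

lemma linear_blinfun_of_endo: "linear (blinfun_apply (blinfun_of_endo x))"
  using blinfun.bounded_linear_right bounded_linear.linear by blast

lemma matrix_of_endo_of_matrix [simp]: "matrix_of_endo (endo_of_matrix M) = M"
  unfolding matrix_of_endo_def endo_of_matrix_def
  by (simp add: endo_of_blinfun_inverse bounded_linear_Blinfun_apply)

lemma matrix_of_endo_one [simp]: "matrix_of_endo 1 = mat 1"
  unfolding matrix_of_endo_def one_endo.rep_eq by (simp add: matrix_id_mat_1[unfolded id_def])

lemma matrix_of_endo_mult: "matrix_of_endo (x * y) = matrix_of_endo x ** matrix_of_endo y"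
proof -
  have "matrix_of_endo (x * y)
      = matrix (blinfun_apply (blinfun_of_endo x) \<circ> blinfun_apply (blinfun_of_endo y))"
    unfolding matrix_of_endo_def times_endo.rep_eq by (simp add: o_def blinfun_compose.rep_eq)
  then show ?thesis
    unfolding matrix_of_endo_def
    by (simp add: matrix_compose[OF linear_blinfun_of_endo linear_blinfun_of_endo])
qed

lemma matrix_of_endo_power: "matrix_of_endo (endo_of_matrix A ^ m) = matpow A m"
  by (induction m) (simp_all del: power_Suc add: power_Suc2 matrix_of_endo_mult)

lemma matrix_of_endo_add: "matrix_of_endo (x + y) = matrix_of_endo x + matrix_of_endo y"
  unfolding matrix_of_endo_def plus_endo.rep_eq
  by (simp add: matrix_def vec_eq_iff blinfun.bilinear_simps)

lemma matrix_of_endo_scaleR: "matrix_of_endo (r *\<^sub>R x) = r *\<^sub>R matrix_of_endo x"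
  unfolding matrix_of_endo_def scaleR_endo.rep_eq
  by (simp add: matrix_def vec_eq_iff blinfun.bilinear_simps)

lemma bounded_linear_matrix_of_endo: "bounded_linear (matrix_of_endo :: 'n::finite endo \<Rightarrow> _)"
proof (rule bounded_linear_intro[where K="real CARD('n) * real CARD('n)"])
  fix x y :: "'n endo" and r :: real
  show "matrix_of_endo (x + y) = matrix_of_endo x + matrix_of_endo y" by (rule matrix_of_endo_add)
  show "matrix_of_endo (r *\<^sub>R x) = r *\<^sub>R matrix_of_endo x" by (rule matrix_of_endo_scaleR)
  have entry_le: "\<bar>matrix_of_endo x $ i $ j\<bar> \<le> norm x" for i j
  proof -
    have "\<bar>matrix_of_endo x $ i $ j\<bar> = \<bar>blinfun_of_endo x (axis j 1) $ i\<bar>"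
      unfolding matrix_of_endo_def matrix_def by simp
    also have "\<dots> \<le> norm (blinfun_of_endo x (axis j 1))" by (rule component_le_norm_cart)
    also have "\<dots> \<le> norm (blinfun_of_endo x) * norm (axis j (1::real))" by (rule norm_blinfun)
    also have "\<dots> = norm x" by (simp add: norm_endo.rep_eq)
    finally show ?thesis .
  qed
  have "norm (matrix_of_endo x) \<le> (\<Sum>i\<in>UNIV. norm (matrix_of_endo x $ i))"
    by (subst norm_vec_def) (rule L2_set_le_sum, simp)
  also have "\<dots> \<le> (\<Sum>i\<in>(UNIV::'n set). \<Sum>j\<in>(UNIV::'n set). \<bar>matrix_of_endo x $ i $ j\<bar>)"
    by (intro sum_mono norm_le_l1_cart)
  also have "\<dots> \<le> (\<Sum>i\<in>(UNIV::'n set). \<Sum>j\<in>(UNIV::'n set). norm x)"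
    by (intro sum_mono entry_le)
  finally show "norm (matrix_of_endo x) \<le> norm x * (real CARD('n) * real CARD('n))"
    by (simp add: mult_ac)
qed

lemma endo_of_matrix_scaleR: "endo_of_matrix (r *\<^sub>R M) = r *\<^sub>R endo_of_matrix M"
proof -
  have "Blinfun ((*v) (r *\<^sub>R M)) = r *\<^sub>R Blinfun ((*v) M)"
    by (rule blinfun_eqI)
       (simp add: bounded_linear_Blinfun_apply scaleR_matrix_vector_assoc scaleR_blinfun.rep_eq)
  then show ?thesis
    unfolding endo_of_matrix_def by (simp add: scaleR_endo_def endo_of_blinfun_inverse)
qed

lemma endo_of_matrix_uminus: "endo_of_matrix (- M) = - endo_of_matrix M"
  using endo_of_matrix_scaleR[of "-1" M] by simp

lemma endo_of_matrix_zero: "endo_of_matrix 0 = 0"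
  using endo_of_matrix_scaleR[of 0 0] by simp

lemma sums_mexp_exp: "(\<lambda>m. (1 / fact m) *\<^sub>R matpow A m) sums matrix_of_endo (exp (endo_of_matrix A))"
  using bounded_linear.sums[OF bounded_linear_matrix_of_endo exp_converges[of "endo_of_matrix A"]]
  by (simp add: matrix_of_endo_scaleR matrix_of_endo_power divide_inverse)

lemma mexp_eq_exp: "mexp A = matrix_of_endo (exp (endo_of_matrix A))"
  unfolding mexp_def using sums_mexp_exp sums_unique by metis

lemma sums_mexp: "(\<lambda>m. (1 / fact m) *\<^sub>R matpow A m) sums mexp A"
  unfolding mexp_eq_exp by (rule sums_mexp_exp)

lemma mexp_zero [simp]: "mexp 0 = mat 1"
  by (simp add: mexp_eq_exp endo_of_matrix_zero)

lemma has_vector_derivative_mexp: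
  "((\<lambda>t. mexp (t *\<^sub>R A)) has_vector_derivative (mexp (t *\<^sub>R A) ** A)) (at t)"
  using bounded_linear.has_vector_derivative[OF bounded_linear_matrix_of_endo
      exp_scaleR_has_vector_derivative_right[where A="endo_of_matrix A" and T=UNIV]]
  by (simp add: mexp_eq_exp endo_of_matrix_scaleR matrix_of_endo_mult)

lemma mexp_uminus_mult: "mexp (- M) ** mexp M = mat 1"
  and mult_mexp_uminus: "mexp M ** mexp (- M) = mat 1"
  by (simp_all add: mexp_eq_exp endo_of_matrix_uminus matrix_of_endo_mult[symmetric]
      exp_minus_inverse exp_minus_inverse[of "- endo_of_matrix M", simplified])

lemma bounded_linear_transpose: "bounded_linear (transpose :: real^'n^'n \<Rightarrow> real^'n^'n)"
  by (rule linear_conv_bounded_linear[THEN iffD1], rule linearI)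
     (simp_all add: transpose_def vec_eq_iff)

lemma matpow_commute: "matpow A m ** A = A ** matpow A m"
  by (induction m) (simp_all, metis matrix_mul_assoc)

lemma transpose_matpow: "transpose (matpow M m) = matpow (transpose M) m"
  by (induction m) (simp_all add: matrix_transpose_mul matpow_commute)

lemma transpose_mexp: "transpose (mexp M) = mexp (transpose M)"
proof -
  have "(\<lambda>m. transpose ((1 / fact m) *\<^sub>R matpow M m)) sums transpose (mexp M)"
    by (rule bounded_linear.sums[OF bounded_linear_transpose sums_mexp])
  then have "(\<lambda>m. (1 / fact m) *\<^sub>R matpow (transpose M) m) sums transpose (mexp M)"
    by (simp add: transpose_scalar transpose_matpow)
  then show ?thesis using sums_mexp sums_unique2 by blast
qed

lemma orthogonal_matrix_mexp: "skew M \<Longrightarrow> orthogonal_matrix (mexp M)"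
  unfolding orthogonal_matrix_def skew_def
  by (simp add: transpose_mexp mexp_uminus_mult mult_mexp_uminus)

section \<open>Uniqueness for linear differential equations\<close>

lemma linear_ode_zero_nonneg:
  fixes S :: "real \<Rightarrow> 'a::real_inner"
  assumes S': "\<And>t. (S has_vector_derivative L (S t)) (at t)" and L: "bounded_linear L"
    and S0: "S 0 = 0" and t: "t \<ge> 0"
  shows "S t = 0"
proof -
  obtain K where K: "K > 0" "\<And>x. norm (L x) \<le> norm x * K"
    using bounded_linear.pos_bounded[OF L] by blast
  define g where "g t = S t \<bullet> S t" for t
  have g': "(g has_real_derivative 2 * (S u \<bullet> L (S u))) (at u)" for u
  proof -
    have "((\<lambda>t. S t \<bullet> S t) has_vector_derivative (S u \<bullet> L (S u) + L (S u) \<bullet> S u)) (at u)"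
      by (rule bounded_bilinear.has_vector_derivative[OF bounded_bilinear_inner S' S'])
    then show ?thesis unfolding g_def has_real_derivative_iff_has_vector_derivative
      by (simp add: inner_commute)
  qed
  have g'_le: "2 * (S u \<bullet> L (S u)) \<le> 2 * K * g u" for u
  proof -
    have "S u \<bullet> L (S u) \<le> norm (S u) * norm (L (S u))" by (rule norm_cauchy_schwarz)
    also have "\<dots> \<le> norm (S u) * (norm (S u) * K)" by (rule mult_left_mono[OF K(2) norm_ge_zero])
    also have "\<dots> = K * g u" by (simp add: g_def power2_norm_eq_inner[symmetric] power2_eq_square)
    finally show ?thesis by simp
  qed
  \<comment> \<open>Gronwall: \<open>g' \<le> 2K g\<close>, so \<open>h\<close> is nonincreasing and \<open>0 \<le> h t \<le> h 0 = 0\<close>.\<close>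
  define h where "h t = exp (-(2*K) * t) * g t" for t
  have h'_nonpos: "\<exists>y. (h has_real_derivative y) (at u) \<and> y \<le> 0" for u
  proof -
    have e: "((\<lambda>t. exp (-(2*K) * t)) has_real_derivative exp (-(2*K)*u) * (-(2*K))) (at u)"
      by (auto intro!: derivative_eq_intros)
    have "(h has_real_derivative
        exp (-(2*K)*u) * (-(2*K)) * g u + exp (-(2*K)*u) * (2 * (S u \<bullet> L (S u)))) (at u)"
      unfolding h_def[abs_def] using DERIV_mult[OF e g'] by (simp add: algebra_simps)
    moreover have "exp (-(2*K)*u) * (2 * (S u \<bullet> L (S u))) \<le> exp (-(2*K)*u) * (2 * K * g u)"
      by (rule mult_left_mono[OF g'_le]) simp
    ultimately show ?thesis by (auto simp: algebra_simps)
  qed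
  have "h t \<le> h 0" by (rule DERIV_nonpos_imp_nonincreasing[OF t]) (use h'_nonpos in blast)
  then have "g t \<le> 0" by (simp add: h_def g_def S0 mult_le_0_iff)
  then show ?thesis unfolding g_def by (metis inner_ge_zero inner_eq_zero_iff order_antisym)
qed

lemma linear_ode_zero:
  fixes S :: "real \<Rightarrow> 'a::real_inner"
  assumes S': "\<And>t. (S has_vector_derivative L (S t)) (at t)" and L: "bounded_linear L"
    and S0: "S 0 = 0"
  shows "S t = 0"
proof (cases "t \<ge> 0")
  case True
  then show ?thesis using linear_ode_zero_nonneg[OF S' L S0] by blast
next
  case False
  have "((S \<circ> uminus) has_vector_derivative (-1) *\<^sub>R L (S (- u))) (at u)" for u
    by (rule vector_diff_chain_at) (auto intro!: derivative_eq_intros S')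
  then have "((\<lambda>u. S (- u)) has_vector_derivative (\<lambda>x. - L x) (S (- u))) (at u)" for u
    by (simp add: o_def)
  from linear_ode_zero_nonneg[OF this bounded_linear_minus[OF L], of "- t"]
  show ?thesis using S0 False by simp
qed

lemma matrix_add_rdistrib: "(A + B) ** C = A ** C + B ** (C::real^'n^'m)"
  by (vector matrix_matrix_mult_def sum.distrib[symmetric] field_simps)

lemma matrix_diff_rdistrib: "(A - B) ** C = A ** C - B ** (C::real^'n^'m)"
  by (vector matrix_matrix_mult_def sum_subtractf[symmetric] field_simps)

lemma matrix_diff_ldistrib: "C ** (A - B) = C ** A - C ** (B::real^'n^'m)"
  by (vector matrix_matrix_mult_def sum_subtractf[symmetric] field_simps)

lemma matrix_neg_left: "(- A) ** C = - (A ** (C::real^'n^'m))"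
  by (vector matrix_matrix_mult_def sum_negf[symmetric])

lemma matrix_neg_right: "C ** (- A) = - (C ** (A::real^'n^'m))"
  by (vector matrix_matrix_mult_def sum_negf[symmetric])

lemmas matrix_ring_simps = matrix_mul_assoc matrix_add_ldistrib matrix_add_rdistrib
  matrix_diff_ldistrib matrix_diff_rdistrib matrix_neg_left matrix_neg_right matrix_transpose_mul

lemma orthogonal_matrix_cancel:
  assumes "orthogonal_matrix U"
  shows "transpose U ** U = mat 1" "U ** transpose U = mat 1"
    "M ** transpose U ** U = M" "M ** U ** transpose U = M"
  using assms by (simp_all add: orthogonal_matrix_def flip: matrix_mul_assoc)

lemma bounded_bilinear_matrix_mult:
  "bounded_bilinear ((**) :: real^'n^'n \<Rightarrow> real^'n^'n \<Rightarrow> real^'n^'n)"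
  unfolding bilinear_conv_bounded_bilinear[symmetric] bilinear_def
  by (auto intro!: linearI
      simp: matrix_add_ldistrib matrix_add_rdistrib matrix_scalar_ac scalar_matrix_assoc)

lemmas has_vector_derivative_matrix_mult =
  bounded_bilinear.has_vector_derivative[OF bounded_bilinear_matrix_mult]

lemma has_vector_derivative_conj:
  fixes U M :: "real \<Rightarrow> real^'n^'n"
  assumes "(U has_vector_derivative U') (at s)" and "(M has_vector_derivative M') (at s)"
  shows "((\<lambda>s. U s ** M s ** transpose (U s)) has_vector_derivative
           (U s ** M s ** transpose U' + (U s ** M' + U' ** M s) ** transpose (U s))) (at s)"
  by (intro has_vector_derivative_matrix_mult assms
      bounded_linear.has_vector_derivative[OF bounded_linear_transpose])

lemma inner_matrix_sum: "(M::real^'n^'m) \<bullet> N = (\<Sum>i\<in>UNIV. \<Sum>j\<in>UNIV. M$i$j * N$i$j)"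
  by (simp add: inner_vec_def)

lemma inner_eq_trace: "(M::real^'n^'n) \<bullet> N = trace (transpose M ** N)"
  by (simp add: inner_matrix_sum trace_def matrix_matrix_mult_def transpose_def)
     (subst sum.swap, simp)

lemma inner_conj: "(V ** M ** transpose V) \<bullet> (N::real^'n^'n) = M \<bullet> (transpose V ** N ** V)"
proof -
  have "(V ** M ** transpose V) \<bullet> N = trace (V ** (transpose M ** transpose V ** N))"
    by (simp add: inner_eq_trace matrix_transpose_mul matrix_mul_assoc)
  also have "\<dots> = trace ((transpose M ** transpose V ** N) ** V)" by (rule trace_mul_sym)
  also have "\<dots> = M \<bullet> (transpose V ** N ** V)" by (simp add: inner_eq_trace matrix_mul_assoc)
  finally show ?thesis .
qed

lemma has_vector_derivative_mult_mexp:
  fixes V A :: "real^'n^'n"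
  shows "((\<lambda>t. V ** mexp (t *\<^sub>R A)) has_vector_derivative V ** mexp (t *\<^sub>R A) ** A) (at t)"
  using has_vector_derivative_matrix_mult[OF has_vector_derivative_const has_vector_derivative_mexp]
  by (simp add: matrix_mul_assoc)

lemma skew_scaleR: "skew A \<Longrightarrow> skew (r *\<^sub>R A)"
  by (simp add: skew_def transpose_scalar)

definition Jsign :: "(nat \<Rightarrow> nat) \<Rightarrow> nat \<Rightarrow> 'n::{finite,linorder} \<Rightarrow> real" where
  "Jsign ns k i = (if blk ns i = k then 1 else -1)"

lemma Jmat_nth: "Jmat ns k $ i $ j = (if i = j then Jsign ns k i else 0)"
  by (simp add: Jmat_def Jsign_def)

lemma matrix_mult_Jmat_nth: "(M ** Jmat ns k) $ i $ j = M $ i $ j * Jsign ns k j"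
  by (simp add: matrix_matrix_mult_def Jmat_nth if_distrib cong: if_cong)

lemma Jmat_mult_nth: "(Jmat ns k ** M) $ i $ j = Jsign ns k i * M $ i $ j"
  by (simp add: matrix_matrix_mult_def Jmat_nth if_distrib if_distribR cong: if_cong)

lemma commutator_Jmat_nth:
  "commutator M (Jmat ns k) $ i $ j = M $ i $ j * (Jsign ns k j - Jsign ns k i)"
  by (simp add: commutator_def matrix_mult_Jmat_nth Jmat_mult_nth algebra_simps)

lemma Jmat_mult_Jmat: "Jmat ns k ** Jmat ns k = mat 1"
  by (simp add: vec_eq_iff Jmat_mult_nth Jmat_nth mat_def Jsign_def)

lemma Jmat_projections_mult:
  assumes "k \<noteq> l"
  shows "(mat 1 + Jmat ns k) ** (mat 1 + Jmat ns l) = (0::real^('n::{finite,linorder})^('n::{finite,linorder}))"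
  using assms
  by (simp add: vec_eq_iff matrix_add_rdistrib Jmat_mult_nth) (simp add: mat_def Jmat_nth Jsign_def)

lemma blk_range:
  fixes i :: "'n::{finite,linorder}"
  assumes "ns 0 = 0" "ns (d+1) = CARD('n)"
  shows "blk ns i \<in> {1..d+1}"
proof -
  have "pos i < CARD('n)"
    unfolding pos_def by (rule psubset_card_mono) auto
  then have pos_less: "pos i < ns (d+1)" using assms by simp
  have "blk ns i \<le> d+1"
    unfolding blk_def by (rule Least_le[of "\<lambda>k. pos i < ns k", OF pos_less])
  moreover have "pos i < ns (blk ns i)"
    unfolding blk_def by (rule LeastI[of "\<lambda>k. pos i < ns k", OF pos_less])
  then have "blk ns i \<noteq> 0" using assms(1) by (metis less_nat_zero_code)
  ultimately show ?thesis by auto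
qed

section \<open>The equation for \<open>X\<close>\<close>

lemma bounded_linear_piblk_commutator:
  fixes A :: "real^('n::{finite,linorder})^('n::{finite,linorder})"
  shows "bounded_linear (\<lambda>Z. (1/2) *\<^sub>R piblk ns (commutator Z A))"
  by (rule linear_conv_bounded_linear[THEN iffD1], rule linearI)
     (simp_all add: vec_eq_iff piblk_def commutator_def matrix_add_ldistrib matrix_add_rdistrib
       scalar_matrix_assoc[symmetric] matrix_scalar_ac algebra_simps)

lemma transpose_piblk_commutator:
  fixes A Z :: "real^('n::{finite,linorder})^('n::{finite,linorder})"
  assumes "skew A"
  shows "transpose (piblk ns (commutator Z A)) = piblk ns (commutator (transpose Z) A)"
proof -
  have A_nth: "A $ x $ y = - A $ y $ x" for x y
  proof -
    have "transpose A $ y $ x = (- A) $ y $ x" using assms by (simp add: skew_def)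
    then show ?thesis by (simp add: transpose_def)
  qed
  have "Z$k$i * A$k$j - A$i$k * Z$j$k = Z$j$k * A$k$i - A$j$k * Z$k$i" for i j k
    using A_nth[of k i] A_nth[of j k] by (simp add: algebra_simps)
  then show ?thesis
    by (simp add: vec_eq_iff transpose_def piblk_def commutator_def matrix_matrix_mult_def
        sum_subtractf[symmetric] eq_commute)
qed

lemma skew_solution:
  fixes A :: "real^('n::{finite,linorder})^('n::{finite,linorder})"
    and X :: "real \<Rightarrow> real^('n::{finite,linorder})^('n::{finite,linorder})"
  assumes A: "skew A" and X0: "skew (X 0)"
    and X': "\<And>t. (X has_vector_derivative (1/2) *\<^sub>R piblk ns (commutator (X t) A)) (at t)"
  shows "skew (X t)"
proof -
  define L where "L Z = (1/2) *\<^sub>R piblk ns (commutator Z A)" for Z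
  define S where "S t = X t + transpose (X t)" for t
  have "(S has_vector_derivative L (S t)) (at t)" for t
  proof -
    have "(S has_vector_derivative L (X t) + transpose (L (X t))) (at t)"
      unfolding S_def[abs_def] L_def
      by (intro has_vector_derivative_add X' bounded_linear.has_vector_derivative[OF bounded_linear_transpose])
    moreover have "L (X t) + transpose (L (X t)) = L (S t)"
      unfolding L_def S_def using transpose_piblk_commutator[OF A]
      by (simp add: transpose_scalar vec_eq_iff piblk_def commutator_def matrix_add_ldistrib
          matrix_add_rdistrib algebra_simps)
    ultimately show ?thesis by simp
  qed
  moreover have "S 0 = 0" using X0 by (simp add: S_def skew_def)
  ultimately have "S t = 0"
    using linear_ode_zero[of S L] bounded_linear_piblk_commutator unfolding L_def by blast
  then show ?thesis by (simp add: S_def skew_def eq_neg_iff_add_eq_0 add.commute)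
qed

lemma diag_blocks_zero_solution:
  fixes X :: "real \<Rightarrow> real^('n::{finite,linorder})^('n::{finite,linorder})"
  assumes X0: "diag_blocks_zero ns (X 0)"
    and X': "\<And>t. (X has_vector_derivative (1/2) *\<^sub>R piblk ns (commutator (X t) A)) (at t)"
  shows "diag_blocks_zero ns (X t)"
  unfolding diag_blocks_zero_def
proof (intro allI impI)
  fix i j :: 'n
  assume same: "blk ns i = blk ns j"
  have "bounded_linear (\<lambda>M. M $ i $ j :: real)"
    by (rule bounded_linear_compose[OF bounded_linear_vec_nth bounded_linear_vec_nth])
  from bounded_linear.has_vector_derivative[OF this X']
  have "((\<lambda>t. X t $ i $ j) has_real_derivative 0) (at u)" for u
    using same by (simp add: has_real_derivative_iff_has_vector_derivative piblk_def)
  then have "X t $ i $ j = X 0 $ i $ j" by (rule DERIV_isconst_all[rule_format])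
  then show "X t $ i $ j = 0" using X0 same by (simp add: diag_blocks_zero_def)
qed

section \<open>Tangent vectors of the flag manifold\<close>

lemma Flag_eqs:
  assumes "p \<in> Flag ns d" "k \<in> {1..d+1}" "l \<in> {1..d+1}"
  shows "p k ** p k = mat 1"
    and "k \<noteq> l \<Longrightarrow> (mat 1 + p k) ** (mat 1 + p l) = 0"
proof -
  obtain U where U: "orthogonal_matrix U" "p = tconj d U (Jmat ns)"
    using assms(1) by (auto simp: Flag_def)
  have p: "p k = U ** Jmat ns k ** transpose U" "p l = U ** Jmat ns l ** transpose U"
    using assms U by (auto simp: tconj_def)
  have "p k ** p k = U ** (Jmat ns k ** Jmat ns k) ** transpose U"
    unfolding p by (simp add: matrix_ring_simps orthogonal_matrix_cancel[OF U(1)])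
  then show "p k ** p k = mat 1" by (simp add: Jmat_mult_Jmat orthogonal_matrix_cancel[OF U(1)])
  assume "k \<noteq> l"
  have "(mat 1 + p k) ** (mat 1 + p l)
      = U ** ((mat 1 + Jmat ns k) ** (mat 1 + Jmat ns l)) ** transpose U"
    unfolding p by (simp add: matrix_ring_simps orthogonal_matrix_cancel[OF U(1)] algebra_simps)
  then show "(mat 1 + p k) ** (mat 1 + p l) = 0" by (simp add: Jmat_projections_mult[OF \<open>k \<noteq> l\<close>])
qed

lemma Flag_tangent_eqs:
  assumes \<gamma>: "\<forall>s. \<gamma> s \<in> Flag ns d" and w: "thas_deriv d \<gamma> w 0"
    and k: "k \<in> {1..d+1}" and l: "l \<in> {1..d+1}"
  shows "\<gamma> 0 k ** w k + w k ** \<gamma> 0 k = 0"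
    and "k \<noteq> l \<Longrightarrow> (mat 1 + \<gamma> 0 k) ** w l + w k ** (mat 1 + \<gamma> 0 l) = 0"
proof -
  have \<gamma>': "((\<lambda>s. \<gamma> s k) has_vector_derivative w k) (at 0)"
    "((\<lambda>s. mat 1 + \<gamma> s k) has_vector_derivative w k) (at 0)"
    "((\<lambda>s. mat 1 + \<gamma> s l) has_vector_derivative w l) (at 0)"
    using w k l by (auto simp: thas_deriv_def intro!: derivative_eq_intros)
  have "((\<lambda>s. \<gamma> s k ** \<gamma> s k) has_vector_derivative \<gamma> 0 k ** w k + w k ** \<gamma> 0 k) (at 0)"
    by (rule has_vector_derivative_matrix_mult[OF \<gamma>'(1) \<gamma>'(1)])
  moreover have "((\<lambda>s. \<gamma> s k ** \<gamma> s k) has_vector_derivative 0) (at 0)"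
    using Flag_eqs(1)[OF \<gamma>[rule_format] k k] by simp
  ultimately show "\<gamma> 0 k ** w k + w k ** \<gamma> 0 k = 0"
    by (rule vector_derivative_unique_at)
  assume "k \<noteq> l"
  have "((\<lambda>s. (mat 1 + \<gamma> s k) ** (mat 1 + \<gamma> s l)) has_vector_derivative
      (mat 1 + \<gamma> 0 k) ** w l + w k ** (mat 1 + \<gamma> 0 l)) (at 0)"
    by (rule has_vector_derivative_matrix_mult[OF \<gamma>'(2,3)])
  moreover have "((\<lambda>s. (mat 1 + \<gamma> s k) ** (mat 1 + \<gamma> s l)) has_vector_derivative 0) (at 0)"
    using Flag_eqs(2)[OF \<gamma>[rule_format] k l \<open>k \<noteq> l\<close>] by simp
  ultimately show "(mat 1 + \<gamma> 0 k) ** w l + w k ** (mat 1 + \<gamma> 0 l) = 0"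
    by (rule vector_derivative_unique_at)
qed

lemma TFlag_frame_eqs:
  assumes V: "orthogonal_matrix V" and w: "w \<in> TFlag ns d (tconj d V (Jmat ns))"
    and k: "k \<in> {1..d+1}" and l: "l \<in> {1..d+1}"
  defines "W \<equiv> \<lambda>k. transpose V ** w k ** V"
  shows "Jmat ns k ** W k + W k ** Jmat ns k = 0"
    and "k \<noteq> l \<Longrightarrow> W k ** (mat 1 + Jmat ns l) + (mat 1 + Jmat ns k) ** W l = 0"
proof -
  obtain \<gamma> where \<gamma>: "\<forall>s. \<gamma> s \<in> Flag ns d" "\<gamma> 0 = tconj d V (Jmat ns)" "thas_deriv d \<gamma> w 0"
    using w unfolding TFlag_def by blast
  have \<gamma>0: "\<gamma> 0 k = V ** Jmat ns k ** transpose V" "\<gamma> 0 l = V ** Jmat ns l ** transpose V"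
    using \<gamma>(2) k l by (auto simp: tconj_def)
  have "Jmat ns k ** W k + W k ** Jmat ns k = transpose V ** (\<gamma> 0 k ** w k + w k ** \<gamma> 0 k) ** V"
    unfolding W_def \<gamma>0 by (simp add: matrix_ring_simps orthogonal_matrix_cancel[OF V])
  then show "Jmat ns k ** W k + W k ** Jmat ns k = 0"
    by (simp add: Flag_tangent_eqs(1)[OF \<gamma>(1,3) k l])
  assume "k \<noteq> l"
  have "W k ** (mat 1 + Jmat ns l) + (mat 1 + Jmat ns k) ** W l
      = transpose V ** ((mat 1 + \<gamma> 0 k) ** w l + w k ** (mat 1 + \<gamma> 0 l)) ** V"
    unfolding W_def \<gamma>0 by (simp add: matrix_ring_simps orthogonal_matrix_cancel[OF V])
  then show "W k ** (mat 1 + Jmat ns l) + (mat 1 + Jmat ns k) ** W l = 0"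
    by (simp add: Flag_tangent_eqs(2)[OF \<gamma>(1,3) k l \<open>k \<noteq> l\<close>])
qed

lemma TFlag_frame_nth:
  fixes V :: "real^('n::{finite,linorder})^('n::{finite,linorder})"
  assumes V: "orthogonal_matrix V" and w: "w \<in> TFlag ns d (tconj d V (Jmat ns))"
    and blk_range: "\<forall>i::'n. blk ns i \<in> {1..d+1}"
  defines "W \<equiv> \<lambda>k. transpose V ** w k ** V"
  shows "k \<in> {1..d+1} \<Longrightarrow> (blk ns i = k) = (blk ns j = k) \<Longrightarrow> W k $ i $ j = 0"
    and "blk ns i \<noteq> blk ns j \<Longrightarrow> W (blk ns i) $ i $ j = - W (blk ns j) $ i $ j"
proof -
  assume k: "k \<in> {1..d+1}" and same: "(blk ns i = k) = (blk ns j = k)"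
  have "(Jmat ns k ** W k + W k ** Jmat ns k) $ i $ j = 0"
    using TFlag_frame_eqs(1)[OF V w k k] unfolding W_def by simp
  then have "(Jsign ns k i + Jsign ns k j) * W k $ i $ j = 0"
    by (simp add: matrix_mult_Jmat_nth Jmat_mult_nth algebra_simps)
  then show "W k $ i $ j = 0" using same by (auto simp: Jsign_def split: if_splits)
next
  assume ne: "blk ns i \<noteq> blk ns j"
  have "(W (blk ns i) ** (mat 1 + Jmat ns (blk ns j)) + (mat 1 + Jmat ns (blk ns i)) ** W (blk ns j))
      $ i $ j = 0"
    using TFlag_frame_eqs(2)[OF V w blk_range[rule_format, of i] blk_range[rule_format, of j] ne]
    unfolding W_def by simp
  then have "W (blk ns i) $ i $ j * (1 + Jsign ns (blk ns j) j)
      + (1 + Jsign ns (blk ns i) i) * W (blk ns j) $ i $ j = 0"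
    by (simp add: matrix_add_ldistrib matrix_add_rdistrib matrix_mult_Jmat_nth Jmat_mult_nth
        algebra_simps)
  then show "W (blk ns i) $ i $ j = - W (blk ns j) $ i $ j" by (simp add: Jsign_def)
qed

lemma tconj_commutator_in_TFlag:
  fixes V X :: "real^('n::{finite,linorder})^('n::{finite,linorder})"
  assumes V: "orthogonal_matrix V" and X: "skew X"
  shows "tconj d V (\<lambda>k. commutator X (Jmat ns k)) \<in> TFlag ns d (tconj d V (Jmat ns))"
proof -
  define U where "U s = V ** mexp (s *\<^sub>R X)" for s
  have U_orth: "orthogonal_matrix (U s)" for s
    unfolding U_def by (rule orthogonal_matrix_mul[OF V orthogonal_matrix_mexp[OF skew_scaleR[OF X]]])
  have U': "(U has_vector_derivative V ** X) (at 0)"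
    using has_vector_derivative_mult_mexp[of V X 0] by (simp add: U_def[abs_def])
  have "((\<lambda>s. U s ** Jmat ns k ** transpose (U s)) has_vector_derivative
      V ** commutator X (Jmat ns k) ** transpose V) (at 0)" for k
    using has_vector_derivative_conj[OF U' has_vector_derivative_const] X
    by (simp add: U_def skew_def commutator_def matrix_ring_simps)
  then have "thas_deriv d (\<lambda>s. tconj d (U s) (Jmat ns)) (tconj d V (\<lambda>k. commutator X (Jmat ns k))) 0"
    by (simp add: thas_deriv_def tconj_def)
  moreover have "tconj d (U s) (Jmat ns) \<in> Flag ns d" for s
    unfolding Flag_def using U_orth by blast
  ultimately show ?thesis
    unfolding TFlag_def by (intro CollectI exI[of _ "\<lambda>s. tconj d (U s) (Jmat ns)"]) (simp add: U_def)
qed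

section \<open>The transported field\<close>

text \<open>\<open>V\<^sup>T Y' V\<close>, the derivative of \<open>Y = V [X, J\<^sub>k] V\<^sup>T\<close> read in the moving frame
  \<open>V' = V A\<close>.\<close>

definition frame_deriv :: "(nat \<Rightarrow> nat) \<Rightarrow> real^('n::{finite,linorder})^('n::{finite,linorder})
    \<Rightarrow> real^('n::{finite,linorder})^('n::{finite,linorder})
    \<Rightarrow> nat \<Rightarrow> real^('n::{finite,linorder})^('n::{finite,linorder})"
  where "frame_deriv ns A X k = commutator A (commutator X (Jmat ns k))
           + commutator ((1/2) *\<^sub>R piblk ns (commutator X A)) (Jmat ns k)"

lemma frame_deriv_nth:
  "frame_deriv ns A X k $ i $ j
    = (\<Sum>m\<in>UNIV. A$i$m * (X$m$j * (Jsign ns k j - Jsign ns k m)))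
      - (\<Sum>m\<in>UNIV. X$i$m * (Jsign ns k m - Jsign ns k i) * A$m$j)
      + (1/2) * piblk ns (commutator X A) $ i $ j * (Jsign ns k j - Jsign ns k i)"
  unfolding frame_deriv_def commutator_def[of A]
  by (simp add: matrix_matrix_mult_def commutator_Jmat_nth)

lemma frame_deriv_block_difference:
  assumes A: "diag_blocks_zero ns A" and X: "diag_blocks_zero ns X"
    and ne: "blk ns i \<noteq> blk ns j"
  shows "frame_deriv ns A X (blk ns j) $ i $ j = frame_deriv ns A X (blk ns i) $ i $ j"
proof -
  let ?a = "blk ns i" and ?b = "blk ns j"
  have signs: "Jsign ns ?b j = 1" "Jsign ns ?a i = 1" "Jsign ns ?a j = -1" "Jsign ns ?b i = -1"
    using ne by (auto simp: Jsign_def)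
  have left: "A$i$m * (X$m$j * (Jsign ns ?b j - Jsign ns ?b m))
      - A$i$m * (X$m$j * (Jsign ns ?a j - Jsign ns ?a m)) = 2 * (A$i$m * X$m$j)" for m
    using A X signs unfolding diag_blocks_zero_def
    by (cases "blk ns m = ?a"; cases "blk ns m = ?b") (auto simp: Jsign_def)
  have right: "X$i$m * (Jsign ns ?b m - Jsign ns ?b i) * A$m$j
      - X$i$m * (Jsign ns ?a m - Jsign ns ?a i) * A$m$j = 2 * (X$i$m * A$m$j)" for m
    using A X signs unfolding diag_blocks_zero_def
    by (cases "blk ns m = ?a"; cases "blk ns m = ?b") (auto simp: Jsign_def)
  have "frame_deriv ns A X ?b $ i $ j - frame_deriv ns A X ?a $ i $ j
      = (\<Sum>m\<in>UNIV. A$i$m * (X$m$j * (Jsign ns ?b j - Jsign ns ?b m))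
                   - A$i$m * (X$m$j * (Jsign ns ?a j - Jsign ns ?a m)))
        - (\<Sum>m\<in>UNIV. X$i$m * (Jsign ns ?b m - Jsign ns ?b i) * A$m$j
                   - X$i$m * (Jsign ns ?a m - Jsign ns ?a i) * A$m$j)
        + (1/2) * piblk ns (commutator X A) $ i $ j * 4"
    unfolding frame_deriv_nth sum_subtractf using signs by simp
  also have "\<dots> = 2 * (\<Sum>m\<in>UNIV. A$i$m * X$m$j) - 2 * (\<Sum>m\<in>UNIV. X$i$m * A$m$j)
      + 2 * commutator X A $ i $ j"
    unfolding left right sum_distrib_left[symmetric] using ne by (simp add: piblk_def)
  also have "\<dots> = 0"
    by (simp add: commutator_def matrix_matrix_mult_def)
  finally show ?thesis by simp
qed

lemma sum_inner_frame_deriv_eq_0: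
  fixes W :: "nat \<Rightarrow> real^('n::{finite,linorder})^('n::{finite,linorder})"
  assumes blk_range: "\<forall>i::'n. blk ns i \<in> {1..d+1}"
    and A: "diag_blocks_zero ns A" and X: "diag_blocks_zero ns X"
    and W_same: "\<And>k i j. k \<in> {1..d+1} \<Longrightarrow> (blk ns i = k) = (blk ns j = k) \<Longrightarrow> W k $ i $ j = 0"
    and W_diff: "\<And>i j. blk ns i \<noteq> blk ns j \<Longrightarrow> W (blk ns i) $ i $ j = - W (blk ns j) $ i $ j"
  shows "(\<Sum>k=1..d+1. frame_deriv ns A X k \<bullet> W k) = 0"
proof -
  let ?D = "frame_deriv ns A X"
  have entry: "(\<Sum>k=1..d+1. ?D k $ i $ j * W k $ i $ j) = 0" for i j
  proof (cases "blk ns i = blk ns j")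
    case True
    then show ?thesis using W_same by (intro sum.neutral) auto
  next
    case False
    have "(\<Sum>k=1..d+1. ?D k $ i $ j * W k $ i $ j)
        = (\<Sum>k\<in>{blk ns i, blk ns j}. ?D k $ i $ j * W k $ i $ j)"
      by (rule sum.mono_neutral_right) (use blk_range W_same in auto)
    also have "\<dots> = (?D (blk ns j) $ i $ j - ?D (blk ns i) $ i $ j) * W (blk ns j) $ i $ j"
      using False W_diff[OF False] by (simp add: algebra_simps)
    also have "\<dots> = 0"
      using frame_deriv_block_difference[OF A X False] by simp
    finally show ?thesis .
  qed
  have "(\<Sum>k=1..d+1. ?D k \<bullet> W k) = (\<Sum>i\<in>UNIV. \<Sum>j\<in>UNIV. \<Sum>k=1..d+1. ?D k $ i $ j * W k $ i $ j)"
    unfolding inner_matrix_sum by (subst sum.swap, subst (2) sum.swap) (rule refl)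
  also have "\<dots> = 0"
    by (intro entry sum.neutral ballI)
  finally show ?thesis .
qed

lemma tinner_frame_deriv_TFlag:
  fixes V :: "real^('n::{finite,linorder})^('n::{finite,linorder})"
  assumes V: "orthogonal_matrix V" and w: "w \<in> TFlag ns d (tconj d V (Jmat ns))"
    and blk_range: "\<forall>i::'n. blk ns i \<in> {1..d+1}"
    and A: "diag_blocks_zero ns A" and X: "diag_blocks_zero ns X"
  shows "tinner d (tconj d V (frame_deriv ns A X)) w = 0"
proof -
  have "tinner d (tconj d V (frame_deriv ns A X)) w
      = (\<Sum>k=1..d+1. frame_deriv ns A X k \<bullet> (transpose V ** w k ** V))"
    unfolding tinner_def tconj_def by (intro sum.cong) (simp_all add: inner_conj)
  also have "\<dots> = 0"
    using TFlag_frame_nth[OF V w blk_range]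
    by (intro sum_inner_frame_deriv_eq_0[OF blk_range A X]) auto
  finally show ?thesis .
qed

lemma thas_deriv_tconj_commutator:
  fixes A :: "real^('n::{finite,linorder})^('n::{finite,linorder})"
    and V X :: "real \<Rightarrow> real^('n::{finite,linorder})^('n::{finite,linorder})"
  assumes V': "(V has_vector_derivative V t ** A) (at t)"
    and X': "(X has_vector_derivative (1/2) *\<^sub>R piblk ns (commutator (X t) A)) (at t)"
    and A: "skew A"
  shows "thas_deriv d (\<lambda>t. tconj d (V t) (\<lambda>k. commutator (X t) (Jmat ns k)))
           (tconj d (V t) (frame_deriv ns A (X t))) t"
proof -
  have "((\<lambda>s. V s ** commutator (X s) (Jmat ns k) ** transpose (V s)) has_vector_derivative
      V t ** frame_deriv ns A (X t) k ** transpose (V t)) (at t)" for k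
  proof -
    have "((\<lambda>s. commutator (X s) (Jmat ns k)) has_vector_derivative
        commutator ((1/2) *\<^sub>R piblk ns (commutator (X t) A)) (Jmat ns k)) (at t)"
      using has_vector_derivative_diff[OF has_vector_derivative_matrix_mult[OF X' has_vector_derivative_const]
          has_vector_derivative_matrix_mult[OF has_vector_derivative_const X']]
      by (simp add: commutator_def)
    from has_vector_derivative_conj[OF V' this] show ?thesis
      using A by (simp add: frame_deriv_def commutator_def skew_def matrix_ring_simps algebra_simps)
  qed
  then show ?thesis
    by (simp add: thas_deriv_def tconj_def)
qed

lemma parallel_along_moving_frame:
  fixes A :: "real^('n::{finite,linorder})^('n::{finite,linorder})"
    and V X :: "real \<Rightarrow> real^('n::{finite,linorder})^('n::{finite,linorder})"
  assumes blk_range: "\<forall>i::'n. blk ns i \<in> {1..d+1}"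
    and V_orth: "\<And>t. orthogonal_matrix (V t)" and V': "\<And>t. (V has_vector_derivative V t ** A) (at t)"
    and A_skew: "skew A" and A_blocks: "diag_blocks_zero ns A"
    and X0_skew: "skew (X 0)" and X0_blocks: "diag_blocks_zero ns (X 0)"
    and X': "\<And>t. (X has_vector_derivative (1/2) *\<^sub>R piblk ns (commutator (X t) A)) (at t)"
  shows "parallel_along ns d (\<lambda>t. tconj d (V t) (Jmat ns))
           (\<lambda>t. tconj d (V t) (\<lambda>k. commutator (X t) (Jmat ns k)))"
  unfolding parallel_along_def
proof (intro allI conjI exI ballI)
  fix t
  have X_skew: "skew (X t)" and X_blocks: "diag_blocks_zero ns (X t)"
    using skew_solution[OF A_skew X0_skew X'] diag_blocks_zero_solution[OF X0_blocks X'] by auto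
  show "tconj d (V t) (\<lambda>k. commutator (X t) (Jmat ns k)) \<in> TFlag ns d (tconj d (V t) (Jmat ns))"
    by (rule tconj_commutator_in_TFlag[OF V_orth X_skew])
  show "thas_deriv d (\<lambda>t. tconj d (V t) (\<lambda>k. commutator (X t) (Jmat ns k)))
      (tconj d (V t) (frame_deriv ns A (X t))) t"
    by (rule thas_deriv_tconj_commutator[OF V' X' A_skew])
  show "tinner d (tconj d (V t) (frame_deriv ns A (X t))) w = 0"
    if "w \<in> TFlag ns d (tconj d (V t) (Jmat ns))" for w
    by (rule tinner_frame_deriv_TFlag[OF V_orth that blk_range A_blocks X_blocks])
qed

theorem corollaryB3:
  fixes ns :: "nat \<Rightarrow> nat" and d :: nat
    and V0 A B :: "real^('n::{finite,linorder})^('n::{finite,linorder})"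
    and X :: "real \<Rightarrow> real^('n::{finite,linorder})^('n::{finite,linorder})"
  assumes "d \<ge> 1"
    and "ns 0 = 0" and "ns (d+1) = CARD('n)"
    and "\<forall>k \<le> d. ns k < ns (Suc k)"
    and "orthogonal_matrix V0"
    and "skew A" and "skew B"
    and "diag_blocks_zero ns A" and "diag_blocks_zero ns B"
    and "X 0 = B"
    and "\<forall>t. (X has_vector_derivative ((1/2) *\<^sub>R piblk ns (commutator (X t) A))) (at t)"
  shows "parallel_along ns d
           (\<lambda>t. tconj d (V0 ** mexp (t *\<^sub>R A)) (Jmat ns))
           (\<lambda>t. tconj d (V0 ** mexp (t *\<^sub>R A)) (\<lambda>k. commutator (X t) (Jmat ns k)))
       \<and> tconj d (V0 ** mexp (0 *\<^sub>R A)) (\<lambda>k. commutator (X 0) (Jmat ns k))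
           = tconj d V0 (\<lambda>k. commutator B (Jmat ns k))"
proof -
  define V where "V t = V0 ** mexp (t *\<^sub>R A)" for t
  have blk_range: "\<forall>i::'n. blk ns i \<in> {1..d+1}"
    using blk_range[OF assms(2,3)] by blast
  have V_orth: "orthogonal_matrix (V t)" for t
    unfolding V_def
    by (rule orthogonal_matrix_mul[OF assms(5) orthogonal_matrix_mexp[OF skew_scaleR[OF assms(6)]]])
  have V': "(V has_vector_derivative V t ** A) (at t)" for t
    unfolding V_def[abs_def] by (rule has_vector_derivative_mult_mexp)
  have "parallel_along ns d (\<lambda>t. tconj d (V t) (Jmat ns))
      (\<lambda>t. tconj d (V t) (\<lambda>k. commutator (X t) (Jmat ns k)))"
    using parallel_along_moving_frame[OF blk_range V_orth V' assms(6,8)] assms(7,9-11) by simp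
  then show ?thesis
    using assms(10) by (simp add: V_def)
qed

end
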